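(* In the setting of the context, for each cone $\sigma_I\in\Sigma_-$ of the fan of $X_-$, the cone $\hat\sigma_I$ generated by $\overline{\hat b_i}$ for $i\in I\cup\{m+1\}$ belongs to the fan $\hat\Sigma_-$ of $[\mathbb C^{m+1}/\!\!/_{\omega_-}K]$.
   Context: GIT data: $K\cong(\mathbb C^\times)^{\mathrm r}$, $\mathbb L=\mathrm{Hom}(\mathbb C^\times,K)$, characters $D_1,\dots,D_m\in\mathbb L^\vee$; $\angle_I=\{\sum_{i\in I}a_iD_i:a_i>0\}$, $\mathcal A_\omega=\{I:\omega\in\angle_I\}$; fan sequence $0\to\mathbb L\to\mathbb Z^m\xrightarrow{\beta}N\to0$, $b_i=\beta(e_i)$; fan $\Sigma_\omega=\{\sigma_I:\bar I\in\mathcal A_\omega\}$. $X_\pm=X_{\omega_\pm}$, $\Sigma_\pm=\Sigma_{\omega_\pm}$, with $\omega_\pm$ in maximal-dimensional chambers separated by a hyperplane wall $W$; $e$ the primitive generator of $W^\perp$ with $\omega_+\cdot e>0$, $M_\pm=\{i:\pm D_i\cdot e>0\}$, $M_0=\{i:D_i\cdot e=0\}$, $S_-$ the extended set of $X_-$. $D_-=\sum_{i\in(M_+\cup M_-)\setminus S_-}\bar D_i$ is assumed smooth, nef and convex: its support function $\phi_{D_-}$ (with $\phi_{D_-}(\bar b_i)=-a_i$ for $i\notin S_-$ where $D_-=\sum a_i\bar D_i$) is linear on each cone of $\Sigma_-$, has convex graph and $\phi_{D_-}(\bar b_i)\ge a_i$ for $i\in S_-$. Define $\hat\beta:\mathbb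 Z^{m+1}\to N\oplus\mathbb Z$ by $\hat\beta(e_i)=(b_i,1)$ for $i\in M_+\cup M_-$, $(b_i,0)$ for $i\in M_0$, and $\hat\beta(e_{m+1})=(0,1)$; $\hat b_i=\hat\beta(e_i)$; $K$ acts on $\mathbb C^{m+1}$ by $(D_1,\dots,D_m,-D)$ with $D=\sum_{i\in M_+\cup M_-}D_i$, and $\hat\Sigma_-$ is the fan of $[\mathbb C^{m+1}/\!\!/_{\omega_-}K]$. *)

theory Defs
  imports "HOL-Analysis.Analysis"
begin

text \<open>Toric GIT data. Characters D_i and stability conditions live in
  the real vector space L^dual tensor R (modelled as real^'r); indices are 1..m.\<close>

definition angle :: "(nat \<Rightarrow> 'a::real_vector) \<Rightarrow> nat set \<Rightarrow> 'a set" where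
  "angle D I = {(\<Sum>i\<in>I. a i *\<^sub>R D i) | a. \<forall>i\<in>I. 0 < a i}"

definition anticones :: "(nat \<Rightarrow> 'a::real_vector) \<Rightarrow> nat \<Rightarrow> 'a \<Rightarrow> nat set set" where
  "anticones D m \<omega> = {I. I \<subseteq> {1..m} \<and> \<omega> \<in> angle D I}"

definition gen_cone :: "(nat \<Rightarrow> 'b::real_vector) \<Rightarrow> nat set \<Rightarrow> 'b set" where
  "gen_cone b I = {(\<Sum>i\<in>I. c i *\<^sub>R b i) | c. \<forall>i\<in>I. 0 \<le> c i}"

definition git_fan :: "(nat \<Rightarrow> 'a::real_vector) \<Rightarrow> (nat \<Rightarrow> 'b::real_vector) \<Rightarrow> nat \<Rightarrow> 'a \<Rightarrow> 'b set set" where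
  "git_fan D b m \<omega> = {gen_cone b I | I. I \<subseteq> {1..m} \<and> {1..m} - I \<in> anticones D m \<omega>}"

definition extended_set :: "(nat \<Rightarrow> 'a::real_vector) \<Rightarrow> nat \<Rightarrow> 'a \<Rightarrow> nat set" where
  "extended_set D m \<omega> = {i \<in> {1..m}. {1..m} - {i} \<notin> anticones D m \<omega>}"

definition chamber :: "(nat \<Rightarrow> 'a::real_vector) \<Rightarrow> nat \<Rightarrow> 'a \<Rightarrow> 'a set" where
  "chamber D m \<omega> = \<Inter> (angle D ` anticones D m \<omega>)"

text \<open>Characters of K acting on C^(m+1): (D_1,...,D_m,-D), D = sum over M.\<close>
definition ext_chars :: "(nat \<Rightarrow> 'a::real_vector) \<Rightarrow> nat \<Rightarrow> nat set \<Rightarrow> nat \<Rightarrow> 'a" where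
  "ext_chars D m M = (\<lambda>i. if i = m + 1 then - (\<Sum>j\<in>M. D j) else D i)"

definition ext_rays :: "(nat \<Rightarrow> 'b::real_vector) \<Rightarrow> nat \<Rightarrow> nat set \<Rightarrow> nat \<Rightarrow> 'b \<times> real" where
  "ext_rays b m M = (\<lambda>i. if i = m + 1 then (0, 1) else if i \<in> M then (b i, 1) else (b i, 0))"

end

theory Submission
  imports Defs
begin

lemma angle_ext_chars:
  assumes "m + 1 \<notin> K"
  shows "angle (ext_chars D m M) K = angle D K"
proof -
  have "(\<Sum>i\<in>K. c i *\<^sub>R ext_chars D m M i) = (\<Sum>i\<in>K. c i *\<^sub>R D i)" for c
    using assms by (intro sum.cong) (auto simp: ext_chars_def)
  then show ?thesis
    unfolding angle_def by simp
qed

lemma anticones_subset_ext_chars: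
  "anticones D m \<omega> \<subseteq> anticones (ext_chars D m M) (m + 1) \<omega>"
proof
  fix K assume "K \<in> anticones D m \<omega>"
  then have K: "K \<subseteq> {1..m}" "\<omega> \<in> angle D K"
    by (auto simp: anticones_def)
  then have "\<omega> \<in> angle (ext_chars D m M) K"
    by (subst angle_ext_chars) auto
  with K show "K \<in> anticones (ext_chars D m M) (m + 1) \<omega>"
    by (auto simp: anticones_def)
qed

lemma gen_cone_in_git_fan:
  assumes "I \<subseteq> {1..m}" and "{1..m} - I \<in> anticones D m \<omega>"
  shows "gen_cone b I \<in> git_fan D b m \<omega>"
  using assms unfolding git_fan_def by blast

text \<open>The anticone condition involves only the characters indexed by the complement of the
  cone, and the complement of \<open>I \<union> {m + 1}\<close> in \<open>{1..m + 1}\<close> is that of \<open>I\<close> in \<open>{1..m}\<close>,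
  where the extended characters agree with the old ones.\<close>

theorem mainTheorem7:
  fixes D :: "nat \<Rightarrow> real^'r" and bb :: "nat \<Rightarrow> real^'n" and m :: nat
    and \<omega>p \<omega>m e :: "real^'r" and \<phi> :: "real^'n \<Rightarrow> real"
    and Mp Mm M0 S :: "nat set" and a :: "nat \<Rightarrow> real"
  assumes D_int: "\<forall>i\<in>{1..m}. \<forall>k. D i $ k \<in> \<int>"
    and L_inj: "\<forall>l::real^'r. (\<forall>i\<in>{1..m}. D i \<bullet> l = 0) \<longrightarrow> l = 0"
    and fan_exact: "\<forall>c::nat \<Rightarrow> real. (\<Sum>i\<in>{1..m}. c i *\<^sub>R bb i) = 0
                      \<longleftrightarrow> (\<exists>l::real^'r. \<forall>i\<in>{1..m}. c i = D i \<bullet> l)"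
    and fan_surj: "\<forall>y::real^'n. \<exists>c::nat \<Rightarrow> real. y = (\<Sum>i\<in>{1..m}. c i *\<^sub>R bb i)"
    and b_int: "\<forall>i\<in>{1..m}. \<forall>k. bb i $ k \<in> \<int>"
    and b_gen: "\<forall>y::real^'n. (\<forall>k. y $ k \<in> \<int>) \<longrightarrow>
                  (\<exists>c::nat \<Rightarrow> int. y = (\<Sum>i\<in>{1..m}. of_int (c i) *\<^sub>R bb i))"
    and ch_p: "interior (chamber D m \<omega>p) \<noteq> {}" and ch_m: "interior (chamber D m \<omega>m) \<noteq> {}"
    and e_int: "\<forall>k. e $ k \<in> \<int>" and e_nz: "e \<noteq> 0"
    and e_prim: "\<forall>(k::int) (v::real^'r). (\<forall>j. v $ j \<in> \<int>) \<and> e = of_int k *\<^sub>R v \<longrightarrow> \<bar>k\<bar> = 1"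
    and sep_p: "chamber D m \<omega>p \<subseteq> {x. x \<bullet> e > 0}"
    and sep_m: "chamber D m \<omega>m \<subseteq> {x. x \<bullet> e < 0}"
    and wall: "closure (chamber D m \<omega>p) \<inter> closure (chamber D m \<omega>m) \<subseteq> {x. x \<bullet> e = 0}"
    and wall_dim: "aff_dim (closure (chamber D m \<omega>p) \<inter> closure (chamber D m \<omega>m))
                     = int CARD('r) - 1"
    and Mp_def: "Mp = {i\<in>{1..m}. D i \<bullet> e > 0}"
    and Mm_def: "Mm = {i\<in>{1..m}. D i \<bullet> e < 0}"
    and M0_def: "M0 = {i\<in>{1..m}. D i \<bullet> e = 0}"
    and S_def: "S = extended_set D m \<omega>m"
    and a_def: "a = (\<lambda>i. if i \<in> (Mp \<union> Mm) - S then 1 else 0)"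
    and phi_rays: "\<forall>i\<in>{1..m} - S. \<phi> (bb i) = - a i"
    and phi_lin: "\<forall>\<sigma>\<in>git_fan D bb m \<omega>m. \<exists>u. \<forall>x\<in>\<sigma>. \<phi> x = u \<bullet> x"
    and phi_convex: "concave_on UNIV \<phi>"
    and phi_ext: "\<forall>i\<in>S. \<phi> (bb i) \<ge> a i"
  shows "\<forall>I. I \<subseteq> {1..m} \<and> {1..m} - I \<in> anticones D m \<omega>m \<longrightarrow>
           gen_cone (ext_rays bb m (Mp \<union> Mm)) (insert (m + 1) I)
             \<in> git_fan (ext_chars D m (Mp \<union> Mm)) (ext_rays bb m (Mp \<union> Mm)) (m + 1) \<omega>m"
proof (intro allI impI)
  fix I assume I: "I \<subseteq> {1..m} \<and> {1..m} - I \<in> anticones D m \<omega>m"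
  then have complement: "{1..m + 1} - insert (m + 1) I = {1..m} - I"
    by auto
  from I have "insert (m + 1) I \<subseteq> {1..m + 1}"
    by auto
  moreover have "{1..m + 1} - insert (m + 1) I \<in> anticones (ext_chars D m (Mp \<union> Mm)) (m + 1) \<omega>m"
    using I anticones_subset_ext_chars unfolding complement by blast
  ultimately show "gen_cone (ext_rays bb m (Mp \<union> Mm)) (insert (m + 1) I)
      \<in> git_fan (ext_chars D m (Mp \<union> Mm)) (ext_rays bb m (Mp \<union> Mm)) (m + 1) \<omega>m"
    by (rule gen_cone_in_git_fan)
qed

end
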